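(* Let $X$ be a complex Banach space, $\mathcal{F}$ an algebra with unit, $\Phi:\mathcal{F}\to\mathcal{C}(X)$ a calculus, and $\mathcal{E}\subseteq\mathrm{bdd}(\mathcal{F},\Phi)$ such that $\mathrm{bdd}(\mathcal{F},\Phi)$ is anchored in $\mathcal{E}$. Then $\mathcal{E}$ determines $\Phi$ on $\mathcal{F}$. If, in addition, $\mathcal{E}$ is multiplicative (closed under products), then $\mathcal{E}$ is an algebraic core for $\Phi$.
   Context: $\mathcal{F}$ need not be commutative. $\mathcal{L}(X)$, $\mathcal{C}(X)$: bounded, resp. closed linear operators on $X$; operator inclusions are graph inclusions, sums/products have natural domains, "$Tx=y$" means $x\in\mathrm{dom}(T)$, $Tx=y$. A proto-calculus is a map $\Phi:\mathcal{F}\to\mathcal{C}(X)$ with (FC1) $\Phi(\mathbf{1})=I$; (FC2) $\lambda\Phi(f)\subseteq\Phi(\lambda f)$, $\Phi(f)+\Phi(g)\subseteq\Phi(f+g)$; (FC3) $\Phi(f)\Phi(g)\subseteq\Phi(fg)$ with $\mathrm{dom}(\Phi(f)\Phi(g))=\mathrm{dom}(\Phi(g))\cap\mathrm{dom}(\Phi(fg))$. $\mathrm{bdd}(\mathcal{F},\Phi)=\{f:\Phi(f)\in\mathcal{L}(X)\}$. For a subset $\mathcal{E}\subseteq\mathcal{F}$ and $f\in\mathcal{F}$, $[f]_{\mathcal{E}}=\{e\in\mathcal{E}: ef\in\mathcal{E}\}$; $\mathrm{reg}(f,\Phi)=[f]_{\mathrm{bdd}(\mathcal{F},\Phi)}$.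 A subset $\mathcal{M}\subseteq\mathrm{bdd}(\mathcal{F},\Phi)$ determines $\Phi$ at $f$ if for all $x,y$: $\Phi(f)x=y\iff\Phi(ef)x=\Phi(e)y$ for all $e\in\mathcal{M}\cap\mathrm{reg}(f,\Phi)$; it determines $\Phi$ on $\mathcal{F}$ if it does so at every $f$. $\mathcal{E}\subseteq\mathrm{bdd}(\mathcal{F},\Phi)$ is an algebraic core for $\Phi$ if for every $f\in\mathcal{F}$: $\Phi(f)x=y\iff\Phi(ef)x=\Phi(e)y$ for all $e\in[f]_{\mathcal{E}}$. A calculus is a proto-calculus such that $\mathrm{bdd}(\mathcal{F},\Phi)$ determines $\Phi$ on $\mathcal{F}$. A nonempty $\mathcal{M}\subseteq\mathrm{bdd}(\mathcal{F},\Phi)$ is an anchor set if $\bigcap_{e\in\mathcal{M}}\ker\Phi(e)=\{0\}$; $g$ is anchored in $\mathcal{E}$ if $[g]_{\mathcal{E}}$ is an anchor set, and a set is anchored in $\mathcal{E}$ if each of its elements is. *)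

theory Defs
  imports "HOL-Analysis.Analysis"
begin

class scaleC =
  fixes scaleC :: "complex \<Rightarrow> 'a \<Rightarrow> 'a" (infixr \<open>*\<^sub>C\<close> 75)

class complex_vector = scaleC + ab_group_add +
  assumes scaleC_add_right: "a *\<^sub>C (x + y) = a *\<^sub>C x + a *\<^sub>C y"
    and scaleC_add_left: "(a + b) *\<^sub>C x = a *\<^sub>C x + b *\<^sub>C x"
    and scaleC_scaleC: "a *\<^sub>C (b *\<^sub>C x) = (a * b) *\<^sub>C x"
    and scaleC_one: "1 *\<^sub>C x = x"

class complex_normed_vector = complex_vector + real_normed_vector +
  assumes scaleR_scaleC: "scaleR r x = complex_of_real r *\<^sub>C x"
    and norm_scaleC: "norm (a *\<^sub>C x) = cmod a * norm x"

class complex_banach = complex_normed_vector + complete_space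

class complex_algebra_1 = complex_vector + ring_1 +
  assumes mult_scaleC_left: "(a *\<^sub>C x) * y = a *\<^sub>C (x * y)"
    and mult_scaleC_right: "x * (a *\<^sub>C y) = a *\<^sub>C (x * y)"

instantiation complex :: complex_banach
begin
definition scaleC_complex :: "complex \<Rightarrow> complex \<Rightarrow> complex" where "scaleC_complex a x = a * x"
instance
  by standard (auto simp: scaleC_complex_def algebra_simps scaleR_conv_of_real norm_mult)
end

instance complex :: complex_algebra_1
  by standard (auto simp: scaleC_complex_def)

text \<open>A (possibly unbounded) operator on X is identified with its graph, a subset of X \<times> X.
  Operator inclusion is graph inclusion; "T x = y" means (x, y) \<in> T.\<close>

definition op_dom :: "('x \<times> 'x) set \<Rightarrow> 'x set" where
  "op_dom T = fst ` T"

definition is_linop :: "('x::complex_vector \<times> 'x) set \<Rightarrow> bool" where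
  "is_linop T \<longleftrightarrow> (0, 0) \<in> T
     \<and> (\<forall>x y u v. (x, y) \<in> T \<longrightarrow> (u, v) \<in> T \<longrightarrow> (x + u, y + v) \<in> T)
     \<and> (\<forall>c x y. (x, y) \<in> T \<longrightarrow> (c *\<^sub>C x, c *\<^sub>C y) \<in> T)
     \<and> (\<forall>x y z. (x, y) \<in> T \<longrightarrow> (x, z) \<in> T \<longrightarrow> y = z)"

definition closed_op :: "('x::complex_banach \<times> 'x) set \<Rightarrow> bool" where
  "closed_op T \<longleftrightarrow> is_linop T \<and> closed T"

definition bdd_op :: "('x::complex_banach \<times> 'x) set \<Rightarrow> bool" where
  "bdd_op T \<longleftrightarrow> (\<exists>A. bounded_linear A \<and> (\<forall>c x. A (c *\<^sub>C x) = c *\<^sub>C A x)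
                      \<and> T = range (\<lambda>x. (x, A x)))"

definition op_id :: "('x \<times> 'x) set" where
  "op_id = {(x, x) | x. True}"

definition op_scale :: "complex \<Rightarrow> ('x::complex_vector \<times> 'x) set \<Rightarrow> ('x \<times> 'x) set" where
  "op_scale c T = {(x, c *\<^sub>C y) | x y. (x, y) \<in> T}"

definition op_plus :: "('x::complex_vector \<times> 'x) set \<Rightarrow> ('x \<times> 'x) set \<Rightarrow> ('x \<times> 'x) set" where
  "op_plus S T = {(x, y + z) | x y z. (x, y) \<in> S \<and> (x, z) \<in> T}"

text \<open>Product S T (first apply T, then S), with natural domain.\<close>
definition op_comp :: "('x \<times> 'x) set \<Rightarrow> ('x \<times> 'x) set \<Rightarrow> ('x \<times> 'x) set" where
  "op_comp S T = {(x, z) | x y z. (x, y) \<in> T \<and> (y, z) \<in> S}"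

definition proto_calculus :: "('f::complex_algebra_1 \<Rightarrow> ('x::complex_banach \<times> 'x) set) \<Rightarrow> bool" where
  "proto_calculus \<Phi> \<longleftrightarrow>
     (\<forall>f. closed_op (\<Phi> f))
   \<and> \<Phi> 1 = op_id
   \<and> (\<forall>c f. op_scale c (\<Phi> f) \<subseteq> \<Phi> (c *\<^sub>C f))
   \<and> (\<forall>f g. op_plus (\<Phi> f) (\<Phi> g) \<subseteq> \<Phi> (f + g))
   \<and> (\<forall>f g. op_comp (\<Phi> f) (\<Phi> g) \<subseteq> \<Phi> (f * g)
            \<and> op_dom (op_comp (\<Phi> f) (\<Phi> g)) = op_dom (\<Phi> g) \<inter> op_dom (\<Phi> (f * g)))"

definition bdd :: "('f::complex_algebra_1 \<Rightarrow> ('x::complex_banach \<times> 'x) set) \<Rightarrow> 'f set" where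
  "bdd \<Phi> = {f. bdd_op (\<Phi> f)}"

definition bracket :: "'f::times \<Rightarrow> 'f set \<Rightarrow> 'f set" where
  "bracket f E = {e \<in> E. e * f \<in> E}"

definition reg :: "'f::complex_algebra_1 \<Rightarrow> ('f \<Rightarrow> ('x::complex_banach \<times> 'x) set) \<Rightarrow> 'f set" where
  "reg f \<Phi> = bracket f (bdd \<Phi>)"

text \<open>"\<Phi>(e f) x = \<Phi>(e) y": x \<in> dom \<Phi>(ef), y \<in> dom \<Phi>(e), and the values agree.\<close>
definition determines_at :: "('f::complex_algebra_1 \<Rightarrow> ('x::complex_banach \<times> 'x) set) \<Rightarrow> 'f set \<Rightarrow> 'f \<Rightarrow> bool" where
  "determines_at \<Phi> M f \<longleftrightarrow>
     (\<forall>x y. (x, y) \<in> \<Phi> f \<longleftrightarrow>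
        (\<forall>e \<in> M \<inter> reg f \<Phi>. \<exists>z. (x, z) \<in> \<Phi> (e * f) \<and> (y, z) \<in> \<Phi> e))"

definition determines :: "('f::complex_algebra_1 \<Rightarrow> ('x::complex_banach \<times> 'x) set) \<Rightarrow> 'f set \<Rightarrow> bool" where
  "determines \<Phi> M \<longleftrightarrow> M \<subseteq> bdd \<Phi> \<and> (\<forall>f. determines_at \<Phi> M f)"

definition algebraic_core :: "('f::complex_algebra_1 \<Rightarrow> ('x::complex_banach \<times> 'x) set) \<Rightarrow> 'f set \<Rightarrow> bool" where
  "algebraic_core \<Phi> E \<longleftrightarrow> E \<subseteq> bdd \<Phi> \<and>
     (\<forall>f x y. (x, y) \<in> \<Phi> f \<longleftrightarrow>
        (\<forall>e \<in> bracket f E. \<exists>z. (x, z) \<in> \<Phi> (e * f) \<and> (y, z) \<in> \<Phi> e))"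

definition calculus :: "('f::complex_algebra_1 \<Rightarrow> ('x::complex_banach \<times> 'x) set) \<Rightarrow> bool" where
  "calculus \<Phi> \<longleftrightarrow> proto_calculus \<Phi> \<and> determines \<Phi> (bdd \<Phi>)"

definition anchor_set :: "('f::complex_algebra_1 \<Rightarrow> ('x::complex_banach \<times> 'x) set) \<Rightarrow> 'f set \<Rightarrow> bool" where
  "anchor_set \<Phi> M \<longleftrightarrow> M \<noteq> {} \<and> M \<subseteq> bdd \<Phi> \<and> (\<forall>x. (\<forall>e \<in> M. (x, 0) \<in> \<Phi> e) \<longrightarrow> x = 0)"

definition anchored_in :: "('f::complex_algebra_1 \<Rightarrow> ('x::complex_banach \<times> 'x) set) \<Rightarrow> 'f \<Rightarrow> 'f set \<Rightarrow> bool" where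
  "anchored_in \<Phi> g E \<longleftrightarrow> anchor_set \<Phi> (bracket g E)"

definition set_anchored_in :: "('f::complex_algebra_1 \<Rightarrow> ('x::complex_banach \<times> 'x) set) \<Rightarrow> 'f set \<Rightarrow> 'f set \<Rightarrow> bool" where
  "set_anchored_in \<Phi> S E \<longleftrightarrow> (\<forall>g \<in> S. anchored_in \<Phi> g E)"

definition multiplicative :: "'f::times set \<Rightarrow> bool" where
  "multiplicative E \<longleftrightarrow> (\<forall>a \<in> E. \<forall>b \<in> E. a * b \<in> E)"

end

theory Submission
  imports Defs
begin

text \<open>If \<open>g\<close> and \<open>g f\<close> are bounded, then for every bounded \<open>e\<close> one has
  \<open>\<Phi>(e g f) x = \<Phi>(e) \<Phi>(g f) x\<close> and \<open>\<Phi>(e g) y = \<Phi>(e) \<Phi>(g) y\<close>. Hence the equations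
  \<open>\<Phi>(e g f) x = \<Phi>(e g) y\<close>, for \<open>e\<close> ranging over an anchor set, force \<open>\<Phi>(g f) x = \<Phi>(g) y\<close>.
  Anchoring \<open>g\<close> in \<open>E\<close> therefore reduces the tests by all of \<open>bdd(\<F>,\<Phi>) \<inter> reg(f,\<Phi>)\<close>,
  which determine \<open>\<Phi>\<close> because it is a calculus, to tests by elements \<open>e g\<close> of \<open>E\<close>.
  For the algebraic core one anchors \<open>g f\<close> instead of \<open>g\<close>; multiplicativity keeps \<open>e g\<close> in \<open>E\<close>.\<close>

definition reg_eq ::
    "('f::complex_algebra_1 \<Rightarrow> ('x::complex_banach \<times> 'x) set) \<Rightarrow> 'f \<Rightarrow> 'f \<Rightarrow> 'x \<Rightarrow> 'x \<Rightarrow> bool" where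
  "reg_eq \<Phi> e f x y \<longleftrightarrow> (\<exists>z. (x, z) \<in> \<Phi> (e * f) \<and> (y, z) \<in> \<Phi> e)"

lemma determines_iff_reg_eq:
  "determines \<Phi> M \<longleftrightarrow> M \<subseteq> bdd \<Phi> \<and>
     (\<forall>f x y. (x, y) \<in> \<Phi> f \<longleftrightarrow> (\<forall>e \<in> M \<inter> reg f \<Phi>. reg_eq \<Phi> e f x y))"
  by (simp add: determines_def determines_at_def reg_eq_def)

lemma algebraic_core_iff_reg_eq:
  "algebraic_core \<Phi> E \<longleftrightarrow> E \<subseteq> bdd \<Phi> \<and>
     (\<forall>f x y. (x, y) \<in> \<Phi> f \<longleftrightarrow> (\<forall>e \<in> bracket f E. reg_eq \<Phi> e f x y))"
  by (simp add: algebraic_core_def reg_eq_def)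

lemma bdd_opE:
  assumes "bdd_op T"
  obtains A where "bounded_linear A" "\<And>c x. A (c *\<^sub>C x) = c *\<^sub>C A x"
    "\<And>x y. (x, y) \<in> T \<longleftrightarrow> y = A x"
  using assms unfolding bdd_op_def by auto

lemma bdd_opI:
  assumes "bounded_linear A" "\<And>c x. A (c *\<^sub>C x) = c *\<^sub>C A x"
    and "\<And>x y. (x, y) \<in> T \<longleftrightarrow> y = A x"
  shows "bdd_op T"
proof -
  have "T = range (\<lambda>x. (x, A x))" using assms(3) by auto
  then show ?thesis unfolding bdd_op_def using assms(1,2) by blast
qed

lemma bdd_total:
  assumes "f \<in> bdd \<Phi>"
  shows "\<exists>y. (x, y) \<in> \<Phi> f"
  using assms by (auto simp: bdd_def elim: bdd_opE)

lemma proto_calculus_comp: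
  assumes "proto_calculus \<Phi>" "(x, u) \<in> \<Phi> h" "(u, z) \<in> \<Phi> e"
  shows "(x, z) \<in> \<Phi> (e * h)"
  using assms unfolding proto_calculus_def op_comp_def by blast

lemma proto_calculus_single_valued:
  assumes "proto_calculus \<Phi>" "(x, y) \<in> \<Phi> f" "(x, z) \<in> \<Phi> f"
  shows "y = z"
proof -
  have "is_linop (\<Phi> f)" using assms(1) by (simp add: proto_calculus_def closed_op_def)
  then show ?thesis using assms(2,3) unfolding is_linop_def by blast
qed

lemma proto_calculus_comp_bdd_iff:
  assumes pc: "proto_calculus \<Phi>" and e: "e \<in> bdd \<Phi>" and u: "(x, u) \<in> \<Phi> h"
  shows "(x, z) \<in> \<Phi> (e * h) \<longleftrightarrow> (u, z) \<in> \<Phi> e"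
proof -
  from e obtain C where C: "\<And>a b. (a, b) \<in> \<Phi> e \<longleftrightarrow> b = C a"
    by (auto simp: bdd_def elim: bdd_opE)
  have "(x, C u) \<in> \<Phi> (e * h)" using proto_calculus_comp[OF pc u] C by blast
  then show ?thesis using proto_calculus_single_valued[OF pc] C by blast
qed

lemma bdd_mult:
  assumes pc: "proto_calculus \<Phi>" and a: "a \<in> bdd \<Phi>" and b: "b \<in> bdd \<Phi>"
  shows "a * b \<in> bdd \<Phi>"
proof -
  from a obtain A where A: "bounded_linear A" "\<And>c x. A (c *\<^sub>C x) = c *\<^sub>C A x"
    "\<And>x y. (x, y) \<in> \<Phi> a \<longleftrightarrow> y = A x"
    by (auto simp: bdd_def elim: bdd_opE)
  from b obtain B where B: "bounded_linear B" "\<And>c x. B (c *\<^sub>C x) = c *\<^sub>C B x"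
    "\<And>x y. (x, y) \<in> \<Phi> b \<longleftrightarrow> y = B x"
    by (auto simp: bdd_def elim: bdd_opE)
  have "bdd_op (\<Phi> (a * b))"
  proof (rule bdd_opI)
    show "bounded_linear (\<lambda>x. A (B x))" using bounded_linear_compose[OF A(1) B(1)] .
    show "A (B (c *\<^sub>C x)) = c *\<^sub>C A (B x)" for c x by (simp only: A(2) B(2))
    show "(x, y) \<in> \<Phi> (a * b) \<longleftrightarrow> y = A (B x)" for x y
      using proto_calculus_comp_bdd_iff[OF pc a, of x "B x" b y] by (simp only: A(3) B(3) simp_thms)
  qed
  then show ?thesis by (simp add: bdd_def)
qed

lemma anchor_set_separates:
  assumes anchor: "anchor_set \<Phi> S"
    and agree: "\<And>e. e \<in> S \<Longrightarrow> \<exists>z. (u, z) \<in> \<Phi> e \<and> (v, z) \<in> \<Phi> e"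
  shows "u = v"
proof -
  have "(u - v, 0) \<in> \<Phi> e" if e: "e \<in> S" for e
  proof -
    from e anchor have "bdd_op (\<Phi> e)" by (auto simp: anchor_set_def bdd_def)
    then obtain C where "bounded_linear C" and C: "\<And>a b. (a, b) \<in> \<Phi> e \<longleftrightarrow> b = C a"
      by (auto elim: bdd_opE)
    moreover have "C u = C v" using agree[OF e] C by auto
    ultimately show ?thesis by (simp add: linear_diff bounded_linear.linear)
  qed
  then show ?thesis using anchor unfolding anchor_set_def by force
qed

lemma reg_eq_if_graph:
  assumes pc: "proto_calculus \<Phi>" and e: "e \<in> bdd \<Phi>" and xy: "(x, y) \<in> \<Phi> f"
  shows "reg_eq \<Phi> e f x y"
  using bdd_total[OF e] proto_calculus_comp[OF pc xy] unfolding reg_eq_def by blast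

lemma reg_eq_if_anchored:
  assumes pc: "proto_calculus \<Phi>" and g: "g \<in> bdd \<Phi>" and gf: "g * f \<in> bdd \<Phi>"
    and anchor: "anchor_set \<Phi> S" and tests: "\<And>e. e \<in> S \<Longrightarrow> reg_eq \<Phi> (e * g) f x y"
  shows "reg_eq \<Phi> g f x y"
proof -
  obtain u where u: "(x, u) \<in> \<Phi> (g * f)" using bdd_total[OF gf] by blast
  obtain v where v: "(y, v) \<in> \<Phi> g" using bdd_total[OF g] by blast
  have "\<exists>z. (u, z) \<in> \<Phi> e \<and> (v, z) \<in> \<Phi> e" if "e \<in> S" for e
  proof -
    have e: "e \<in> bdd \<Phi>" using \<open>e \<in> S\<close> anchor by (auto simp: anchor_set_def)
    from tests[OF \<open>e \<in> S\<close>] obtain z where "(x, z) \<in> \<Phi> (e * (g * f))" "(y, z) \<in> \<Phi> (e * g)"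
      by (auto simp: reg_eq_def mult.assoc)
    then show ?thesis
      using proto_calculus_comp_bdd_iff[OF pc e u] proto_calculus_comp_bdd_iff[OF pc e v] by blast
  qed
  then have "u = v" using anchor_set_separates[OF anchor] by blast
  then show ?thesis using u v by (auto simp: reg_eq_def)
qed

lemma determines_if_bdd_anchored:
  assumes calc: "calculus \<Phi>" and E: "E \<subseteq> bdd \<Phi>"
    and anchored: "set_anchored_in \<Phi> (bdd \<Phi>) E"
  shows "determines \<Phi> E"
proof -
  have pc: "proto_calculus \<Phi>" using calc by (simp add: calculus_def)
  have graph_iff: "(x, y) \<in> \<Phi> f \<longleftrightarrow> (\<forall>g \<in> bdd \<Phi> \<inter> reg f \<Phi>. reg_eq \<Phi> g f x y)" for f x y
    using calc unfolding calculus_def determines_iff_reg_eq by blast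
  have "(x, y) \<in> \<Phi> f" if tests: "\<forall>e \<in> E \<inter> reg f \<Phi>. reg_eq \<Phi> e f x y" for f x y
  proof -
    have "reg_eq \<Phi> g f x y" if g: "g \<in> bdd \<Phi>" and gf: "g * f \<in> bdd \<Phi>" for g
    proof (rule reg_eq_if_anchored[OF pc g gf])
      show "anchor_set \<Phi> (bracket g E)"
        using anchored g unfolding set_anchored_in_def anchored_in_def by blast
      fix e assume "e \<in> bracket g E"
      then have "e * g \<in> E" and "e * g * f \<in> bdd \<Phi>"
        using bdd_mult[OF pc _ gf] E by (auto simp: bracket_def mult.assoc)
      then show "reg_eq \<Phi> (e * g) f x y" using tests E by (auto simp: reg_def bracket_def)
    qed
    then show ?thesis using graph_iff by (simp add: reg_def bracket_def)
  qed
  moreover have "reg_eq \<Phi> e f x y" if "(x, y) \<in> \<Phi> f" "e \<in> E" for e f x y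
    using reg_eq_if_graph[OF pc] E that by blast
  ultimately show ?thesis
    unfolding determines_iff_reg_eq using E by (intro conjI allI iffI ballI) auto
qed

lemma algebraic_core_if_bdd_anchored:
  assumes calc: "calculus \<Phi>" and E: "E \<subseteq> bdd \<Phi>"
    and anchored: "set_anchored_in \<Phi> (bdd \<Phi>) E" and mult: "multiplicative E"
  shows "algebraic_core \<Phi> E"
proof -
  have pc: "proto_calculus \<Phi>" using calc by (simp add: calculus_def)
  have graph_iff: "(x, y) \<in> \<Phi> f \<longleftrightarrow> (\<forall>g \<in> E \<inter> reg f \<Phi>. reg_eq \<Phi> g f x y)" for f x y
    using determines_if_bdd_anchored[OF calc E anchored] unfolding determines_iff_reg_eq by blast
  have "(x, y) \<in> \<Phi> f" if tests: "\<forall>e \<in> bracket f E. reg_eq \<Phi> e f x y" for f x y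
  proof -
    have "reg_eq \<Phi> g f x y" if g: "g \<in> E" and gf: "g * f \<in> bdd \<Phi>" for g
    proof (rule reg_eq_if_anchored[OF pc _ gf])
      show "g \<in> bdd \<Phi>" using g E by blast
      show "anchor_set \<Phi> (bracket (g * f) E)"
        using anchored gf unfolding set_anchored_in_def anchored_in_def by blast
      fix e assume "e \<in> bracket (g * f) E"
      then have "e * g \<in> bracket f E"
        using mult g by (auto simp: bracket_def multiplicative_def mult.assoc)
      then show "reg_eq \<Phi> (e * g) f x y" using tests by blast
    qed
    then show ?thesis using graph_iff by (simp add: reg_def bracket_def)
  qed
  moreover have "reg_eq \<Phi> e f x y" if "(x, y) \<in> \<Phi> f" "e \<in> bracket f E" for e f x y
    using reg_eq_if_graph[OF pc] E that by (auto simp: bracket_def)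
  ultimately show ?thesis
    unfolding algebraic_core_iff_reg_eq using E by (intro conjI allI iffI ballI) auto
qed

theorem theorem4p2:
  fixes \<Phi> :: "'f::complex_algebra_1 \<Rightarrow> ('x::complex_banach \<times> 'x) set"
    and E :: "'f set"
  assumes "calculus \<Phi>"
    and "E \<subseteq> bdd \<Phi>"
    and "set_anchored_in \<Phi> (bdd \<Phi>) E"
  shows "determines \<Phi> E \<and> (multiplicative E \<longrightarrow> algebraic_core \<Phi> E)"
  using determines_if_bdd_anchored[OF assms] algebraic_core_if_bdd_anchored[OF assms] by blast

end
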